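(* Let $\mathcal{A}=\langle L,\mathcal{X},E\rangle$ be a timed automaton, $\ell_0,\ell\in L$, $\nu\in\mathbb{R}_{\ge0}^{\mathcal{X}}$ and $\gamma\subseteq\mathcal{X}$. Then $\mathcal{A}$ has a run from $\langle\ell_0,\mathbf{0}\rangle$ to $\langle\ell,\nu\rangle$ along which the set of clocks reset (i.e. the union of the reset sets $\lambda$ of the discrete transitions taken) is exactly $\gamma$ if and only if $R(\mathcal{A})$ has a run from the state $\langle\ell_0,\mathbf{0},\{\mathbf{0}\},\gamma\rangle$ to some state $\langle\ell,\upsilon,Z,\emptyset\rangle$ with $\upsilon\in\mathbb{N}^{\mathcal{X}}$ and $Z\in\mathcal{Z}_1(\mathcal{X})$ such that $\nu-\upsilon\in Z$.
   Context: Let $\mathcal{X}$ be a finite set of clocks. Clock constraints $\Phi(\mathcal{X})$ are generated by $\varphi ::= \mathbf{true}\mid x<k\mid x=k\mid x>k\mid \varphi\wedge\varphi$ with $k\in\mathbb{N}$, $x\in\mathcal{X}$. A clock valuation is a map $\nu:\mathcal{X}\to\mathbb{R}_{\ge0}$ (the same operations are used for maps $\mathcal{X}\to\mathbb{R}$); $\nu\models\varphi$ denotes satisfaction; $\mathbf{0}$ is the all-zero valuation; $(\nu+t)(x)=\nu(x)+t$ for $t\ge0$; for $\lambda\subseteq\mathcal{X}$, $\nu[\lambda\leftarrow0]$ sets clocks in $\lambda$ to $0$ and leaves others unchanged. A timed automaton is $\mathcal{A}=\langle L,\mathcal{X},E\rangle$ with finite location set $L$, finite clock set $\mathcal{X}$,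 and edges $E\subseteq L\times\Phi(\mathcal{X})\times2^{\mathcal{X}}\times L$. A configuration is a pair $\langle\ell,\nu\rangle$. Transitions: delay $\langle\ell,\nu\rangle\xrightarrow{d}\langle\ell,\nu+d\rangle$ for $d\ge0$; discrete $\langle\ell,\nu\rangle\xrightarrow{0}\langle\ell',\nu[\lambda\leftarrow0]\rangle$ whenever $\langle\ell,\varphi,\lambda,\ell'\rangle\in E$ and $\nu\models\varphi$. A run is a finite (possibly empty) sequence of consecutive transitions. A 1-bounded zone is a subset of $[0,1]^{\mathcal{X}}$ defined by a finite conjunction of constraints $x_i\bowtie c$ and $x_i-x_j\bowtie c$ with $c\in\{-1,0,1\}$ and $\bowtie\in\{<,\le,=,\ge,>\}$; $\mathcal{Z}_1(\mathcal{X})$ is the (finite) set of 1-bounded zones. For a set $Z$ of valuations, $Z[\lambda\leftarrow0]=\{\nu[\lambda\leftarrow0]:\nu\in Z\}$ and $\overrightarrow{Z}=\{\nu+t:\nu\in Z,t\ge0\}\cap[0,1]^{\mathcal{X}}$; $[\![x=1]\!]$ is the set of valuations with $x=1$; for $\upsilon\in\mathbb{N}^{\mathcal{X}}$, $\upsilon[x\leftarrow x+1]$ increments coordinate $x$ by one. The automaton $R(\mathcal{A})$ is the (infinite-state, nondeterministic, with $\varepsilon$-transitions) automaton over alphabet $\mathcal{X}$ with states $Q=L\times\mathbb{N}^{\mathcal{X}}\times\mathcal{Z}_1(\mathcal{X})\times2^{\mathcal{X}}$ and transitions: (1) delay: $\langle\ell,\upsilon,Z,\gamma\rangle\xrightarrow{\varepsilon}\langle\ell,\upsilon,\overrightarrow{Z},\gamma\rangle$;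 (2) wrapping, for each $x\in\mathcal{X}$: $\langle\ell,\upsilon,Z,\gamma\rangle\xrightarrow{\sigma}\langle\ell,\upsilon[x\leftarrow x+1],(Z\cap[\![x=1]\!])[x\leftarrow0],\gamma\rangle$, where $\sigma=\varepsilon$ if $x\in\gamma$ and $\sigma=x$ otherwise; (3) for each edge $\langle\ell,\varphi,\lambda,\ell'\rangle\in E$ and each $\gamma'$ with $\gamma'\cup\lambda=\gamma$: $\langle\ell,\upsilon,Z,\gamma\rangle\xrightarrow{\varepsilon}\langle\ell',\upsilon[\lambda\leftarrow0],\{\nu\in Z:\upsilon+\nu\models\varphi\}[\lambda\leftarrow0],\gamma'\rangle$. A run of $R(\mathcal{A})$ on word $w\in\mathcal{X}^*$ is a finite sequence of consecutive transitions whose concatenated labels equal $w$. *)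

theory Defs
  imports Complex_Main
begin

datatype 'c cc = CTrue | CLt 'c nat | CEq 'c nat | CGt 'c nat | CAnd "'c cc" "'c cc"

type_synonym 'c val = "'c \<Rightarrow> real"

fun sat :: "'c val \<Rightarrow> 'c cc \<Rightarrow> bool" where
  "sat v CTrue = True"
| "sat v (CLt x k) = (v x < real k)"
| "sat v (CEq x k) = (v x = real k)"
| "sat v (CGt x k) = (v x > real k)"
| "sat v (CAnd a b) = (sat v a \<and> sat v b)"

definition reset :: "'c val \<Rightarrow> 'c set \<Rightarrow> 'c val" where
  "reset v r = (\<lambda>x. if x \<in> r then 0 else v x)"

definition delay :: "'c val \<Rightarrow> real \<Rightarrow> 'c val" where
  "delay v t = (\<lambda>x. v x + t)"

type_synonym ('l, 'c) edge = "'l \<times> 'c cc \<times> 'c set \<times> 'l"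

definition timed_automaton :: "'l set \<Rightarrow> ('l, 'c) edge set \<Rightarrow> bool" where
  "timed_automaton L E \<longleftrightarrow> finite L \<and> E \<subseteq> L \<times> UNIV \<times> UNIV \<times> L"

inductive ta_run :: "('l, 'c) edge set \<Rightarrow> 'l \<times> 'c val \<Rightarrow> 'c set \<Rightarrow> 'l \<times> 'c val \<Rightarrow> bool"
  for E where
  ta_refl: "ta_run E c {} c"
| ta_delay: "d \<ge> 0 \<Longrightarrow> ta_run E (l, delay v d) G c' \<Longrightarrow> ta_run E (l, v) G c'"
| ta_discrete: "(l, g, r, l') \<in> E \<Longrightarrow> sat v g \<Longrightarrow> ta_run E (l', reset v r) G c'
     \<Longrightarrow> ta_run E (l, v) (r \<union> G) c'"

datatype rel = RLt | RLe | REq | RGe | RGt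

fun rel_holds :: "rel \<Rightarrow> real \<Rightarrow> real \<Rightarrow> bool" where
  "rel_holds RLt a b = (a < b)"
| "rel_holds RLe a b = (a \<le> b)"
| "rel_holds REq a b = (a = b)"
| "rel_holds RGe a b = (a \<ge> b)"
| "rel_holds RGt a b = (a > b)"

datatype 'c zc = ZSingle 'c rel int | ZDiff 'c 'c rel int

fun zc_holds :: "'c val \<Rightarrow> 'c zc \<Rightarrow> bool" where
  "zc_holds v (ZSingle x b c) = rel_holds b (v x) (real_of_int c)"
| "zc_holds v (ZDiff x y b c) = rel_holds b (v x - v y) (real_of_int c)"

fun zc_const :: "'c zc \<Rightarrow> int" where
  "zc_const (ZSingle x b c) = c"
| "zc_const (ZDiff x y b c) = c"

definition unit_box :: "'c val set" where
  "unit_box = {v. \<forall>x. 0 \<le> v x \<and> v x \<le> 1}"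

definition zone_of :: "'c zc list \<Rightarrow> 'c val set" where
  "zone_of cs = {v \<in> unit_box. \<forall>a \<in> set cs. zc_holds v a}"

definition zones1 :: "'c val set set" where
  "zones1 = {zone_of cs | cs. \<forall>a \<in> set cs. zc_const a \<in> {-1, 0, 1}}"

definition zone_reset :: "'c val set \<Rightarrow> 'c set \<Rightarrow> 'c val set" where
  "zone_reset Z r = (\<lambda>v. reset v r) ` Z"

definition zone_future :: "'c val set \<Rightarrow> 'c val set" where
  "zone_future Z = {delay v t | v t. v \<in> Z \<and> t \<ge> 0} \<inter> unit_box"

definition clock_eq1 :: "'c \<Rightarrow> 'c val set" where
  "clock_eq1 x = {v. v x = 1}"

type_synonym ('l, 'c) rstate = "'l \<times> ('c \<Rightarrow> nat) \<times> 'c val set \<times> 'c set"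

definition nreset :: "('c \<Rightarrow> nat) \<Rightarrow> 'c set \<Rightarrow> ('c \<Rightarrow> nat)" where
  "nreset u r = (\<lambda>x. if x \<in> r then 0 else u x)"

text \<open>Single transitions of R(A); label None is epsilon, Some x is letter x.\<close>
inductive R_step :: "('l, 'c) edge set \<Rightarrow> ('l, 'c) rstate \<Rightarrow> 'c option \<Rightarrow> ('l, 'c) rstate \<Rightarrow> bool"
  for E where
  R_delay: "R_step E (l, u, Z, \<gamma>) None (l, u, zone_future Z, \<gamma>)"
| R_wrap: "R_step E (l, u, Z, \<gamma>) (if x \<in> \<gamma> then None else Some x)
     (l, u(x := Suc (u x)), zone_reset (Z \<inter> clock_eq1 x) {x}, \<gamma>)"
| R_edge: "(l, \<phi>, r, l') \<in> E \<Longrightarrow> \<gamma>' \<union> r = \<gamma> \<Longrightarrow>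
     R_step E (l, u, Z, \<gamma>) None
       (l', nreset u r, zone_reset {v \<in> Z. sat (\<lambda>x. real (u x) + v x) \<phi>} r, \<gamma>')"

definition label_word :: "'c option \<Rightarrow> 'c list" where
  "label_word s = (case s of None \<Rightarrow> [] | Some x \<Rightarrow> [x])"

inductive R_run :: "('l, 'c) edge set \<Rightarrow> ('l, 'c) rstate \<Rightarrow> 'c list \<Rightarrow> ('l, 'c) rstate \<Rightarrow> bool"
  for E where
  R_refl: "R_run E q [] q"
| R_cons: "R_step E q s q' \<Longrightarrow> R_run E q' w q'' \<Longrightarrow> R_run E q (label_word s @ w) q''"

end

theory Submission
  imports Defs
begin

text \<open>A state \<open>\<langle>l, \<upsilon>, Z, \<gamma>\<rangle>\<close> of \<open>R(A)\<close> stands for the configurations \<open>\<langle>l, \<upsilon> + v\<rangle>\<close>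
  with \<open>v \<in> Z\<close>, \<open>\<gamma>\<close> being the clocks that still have to be reset. Soundness is then a
  step-by-step simulation backwards along a run of \<open>R(A)\<close>. For completeness, a discrete
  transition of \<open>A\<close> is matched by an edge transition of \<open>R(A)\<close>, and a delay by alternating
  zone delays with wrapping steps, one for each time a clock's fractional part passes \<open>1\<close>.
  The only real work is to show that 1-bounded zones are closed under the zone operations;
  writing zones as difference constraints, the existential quantifiers in future and reset are
  removed by Fourier--Motzkin elimination, and constants outside \<open>[-1, 1]\<close> can be clamped
  because all clocks range over \<open>[0, 1]\<close>.\<close>

section \<open>Fourier--Motzkin elimination for difference constraints\<close>

type_synonym 'v dc = "'v \<times> 'v \<times> rel \<times> int"

fun dc_holds :: "('v \<Rightarrow> real) \<Rightarrow> 'v dc \<Rightarrow> bool" where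
  "dc_holds w (a, b, r, c) = rel_holds r (w a - w b) (real_of_int c)"

fun map_dc :: "('v \<Rightarrow> 'w) \<Rightarrow> 'v dc \<Rightarrow> 'w dc" where
  "map_dc f (a, b, r, c) = (f a, f b, r, c)"

lemma dc_holds_map_dc: "dc_holds w (map_dc f g) \<longleftrightarrow> dc_holds (w \<circ> f) g"
  by (cases g) simp

lemma dc_holds_shift: "dc_holds (\<lambda>a. w a - t) g \<longleftrightarrow> dc_holds w g"
  by (cases g) simp

text \<open>A bound \<open>(p, k, s)\<close> on a variable stands for the term \<open>w p + k\<close>; the flag \<open>s\<close>
  marks it as strict.\<close>
type_synonym 'v bound = "'v \<times> int \<times> bool"

fun bound_below :: "('v \<Rightarrow> real) \<Rightarrow> 'v bound \<Rightarrow> real \<Rightarrow> bool" where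
  "bound_below w (p, k, s) t = (if s then w p + k < t else w p + k \<le> t)"

fun bound_above :: "('v \<Rightarrow> real) \<Rightarrow> 'v bound \<Rightarrow> real \<Rightarrow> bool" where
  "bound_above w (q, m, s) t = (if s then t < w q + m else t \<le> w q + m)"

fun lower_bounds :: "'v \<Rightarrow> 'v dc \<Rightarrow> 'v bound list" where
  "lower_bounds x (a, b, r, c) =
    (if a = x \<and> b \<noteq> x then
      (case r of RGt \<Rightarrow> [(b, c, True)] | RGe \<Rightarrow> [(b, c, False)] | REq \<Rightarrow> [(b, c, False)] | _ \<Rightarrow> [])
    else if b = x \<and> a \<noteq> x then
      (case r of RLt \<Rightarrow> [(a, -c, True)] | RLe \<Rightarrow> [(a, -c, False)] | REq \<Rightarrow> [(a, -c, False)] | _ \<Rightarrow> [])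
    else [])"

fun upper_bounds :: "'v \<Rightarrow> 'v dc \<Rightarrow> 'v bound list" where
  "upper_bounds x (a, b, r, c) =
    (if a = x \<and> b \<noteq> x then
      (case r of RLt \<Rightarrow> [(b, c, True)] | RLe \<Rightarrow> [(b, c, False)] | REq \<Rightarrow> [(b, c, False)] | _ \<Rightarrow> [])
    else if b = x \<and> a \<noteq> x then
      (case r of RGt \<Rightarrow> [(a, -c, True)] | RGe \<Rightarrow> [(a, -c, False)] | REq \<Rightarrow> [(a, -c, False)] | _ \<Rightarrow> [])
    else [])"

fun combine_bounds :: "'v bound \<Rightarrow> 'v bound \<Rightarrow> 'v dc" where
  "combine_bounds (p, k, s) (q, m, s') = (p, q, if s \<or> s' then RLt else RLe, m - k)"

text \<open>A constraint \<open>x - x \<bowtie> c\<close> does not depend on \<open>x\<close> and is kept, renamed to the arbitrary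
  other variable \<open>z\<close>.\<close>
definition fm_elim :: "'v \<Rightarrow> 'v \<Rightarrow> 'v dc list \<Rightarrow> 'v dc list" where
  "fm_elim x z D =
     filter (\<lambda>(a, b, r, c). a \<noteq> x \<and> b \<noteq> x) D
   @ map (\<lambda>(a, b, r, c). (z, z, r, c)) (filter (\<lambda>(a, b, r, c). a = x \<and> b = x) D)
   @ [combine_bounds l h. l \<leftarrow> concat (map (lower_bounds x) D), h \<leftarrow> concat (map (upper_bounds x) D)]"

lemma dc_holds_upd_iff_bounds:
  assumes "(a = x) \<noteq> (b = x)"
  shows "dc_holds (w(x := t)) (a, b, r, c) \<longleftrightarrow>
    (\<forall>l\<in>set (lower_bounds x (a, b, r, c)). bound_below w l t) \<and>
    (\<forall>h\<in>set (upper_bounds x (a, b, r, c)). bound_above w h t)"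
  using assms by (cases r) auto

lemma dc_holds_combine_bounds: "bound_below w l t \<Longrightarrow> bound_above w h t \<Longrightarrow> dc_holds w (combine_bounds l h)"
  by (cases l; cases h) (auto split: if_splits)

lemma exists_between_bounds:
  fixes Lo Hi :: "('a::linordered_field \<times> bool) set"
  assumes "finite Lo" "finite Hi"
    and compatible: "\<And>a s b s'. (a, s) \<in> Lo \<Longrightarrow> (b, s') \<in> Hi \<Longrightarrow> if s \<or> s' then a < b else a \<le> b"
  shows "\<exists>t. (\<forall>(a, s)\<in>Lo. if s then a < t else a \<le> t) \<and> (\<forall>(b, s)\<in>Hi. if s then t < b else t \<le> b)"
proof -
  define m where "m = Max (fst ` Lo)"
  define M where "M = Min (fst ` Hi)"
  have m_ge: "a \<le> m" if "(a, s) \<in> Lo" for a s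
    unfolding m_def using assms(1) that by (intro Max_ge) (auto intro: rev_image_eqI)
  have M_le: "M \<le> b" if "(b, s) \<in> Hi" for b s
    unfolding M_def using assms(2) that by (intro Min_le) (auto intro: rev_image_eqI)
  consider "Lo = {}" | "Hi = {}" | "Lo \<noteq> {}" "Hi \<noteq> {}" by blast
  then show ?thesis
  proof cases
    case 1
    show ?thesis
      using 1 M_le by (intro exI[of _ "M - 1"]) (fastforce split: if_splits)
  next
    case 2
    show ?thesis
      using 2 m_ge by (intro exI[of _ "m + 1"]) (fastforce split: if_splits)
  next
    case 3
    obtain sm where sm: "(m, sm) \<in> Lo"
      using Max_in[of "fst ` Lo"] assms(1) 3 unfolding m_def by fastforce
    obtain sM where sM: "(M, sM) \<in> Hi"
      using Min_in[of "fst ` Hi"] assms(2) 3 unfolding M_def by fastforce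
    have "m \<le> M" using compatible[OF sm sM] by (auto split: if_splits)
    then consider "m < M" | "m = M" by linarith
    then show ?thesis
    proof cases
      case 1
      show ?thesis
        using 1 m_ge M_le by (intro exI[of _ "(m + M) / 2"]) (fastforce simp: field_simps split: if_splits)
    next
      case 2
      \<comment> \<open>the extreme bounds coincide, so by compatibility no bound at that value is strict\<close>
      have "if s then a < m else a \<le> m" if "(a, s) \<in> Lo" for a s
        using compatible[OF that sM] m_ge[OF that] 2 by (auto split: if_splits)
      moreover have "if s then m < b else m \<le> b" if "(b, s) \<in> Hi" for b s
        using compatible[OF sm that] by (auto split: if_splits)
      ultimately show ?thesis by blast
    qed
  qed
qed

lemma fm_elim_sound:
  assumes "z \<noteq> x" and sat: "\<forall>g\<in>set D. dc_holds (w(x := t)) g"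
  shows "\<forall>g\<in>set (fm_elim x z D). dc_holds w g"
proof
  have lower: "bound_below w l t" if "l \<in> set (lower_bounds x g)" "g \<in> set D" for l g
  proof (cases g)
    case (fields a b r c)
    then have "(a = x) \<noteq> (b = x)" using that by (auto split: if_splits)
    with sat that fields dc_holds_upd_iff_bounds show ?thesis by metis
  qed
  have upper: "bound_above w h t" if "h \<in> set (upper_bounds x g)" "g \<in> set D" for h g
  proof (cases g)
    case (fields a b r c)
    then have "(a = x) \<noteq> (b = x)" using that by (auto split: if_splits)
    with sat that fields dc_holds_upd_iff_bounds show ?thesis by metis
  qed
  fix g assume "g \<in> set (fm_elim x z D)"
  then consider (free) a b r c where "(a, b, r, c) \<in> set D" "a \<noteq> x" "b \<noteq> x" "g = (a, b, r, c)"
    | (self) r c where "(x, x, r, c) \<in> set D" "g = (z, z, r, c)"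
    | (combined) l h g1 g2 where "l \<in> set (lower_bounds x g1)" "g1 \<in> set D"
        "h \<in> set (upper_bounds x g2)" "g2 \<in> set D" "g = combine_bounds l h"
    unfolding fm_elim_def by auto
  then show "dc_holds w g"
  proof cases
    case free
    then show ?thesis using sat by fastforce
  next
    case self
    then show ?thesis using sat by fastforce
  next
    case combined
    then show ?thesis using lower upper dc_holds_combine_bounds by metis
  qed
qed

lemma fm_elim_complete:
  assumes sat: "\<forall>g\<in>set (fm_elim x z D). dc_holds w g"
  shows "\<exists>t. \<forall>g\<in>set D. dc_holds (w(x := t)) g"
proof -
  define Ls where "Ls = concat (map (lower_bounds x) D)"
  define Hs where "Hs = concat (map (upper_bounds x) D)"
  let ?val = "\<lambda>(p, k::int, s::bool). (w p + real_of_int k, s)"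
  have "if s \<or> s' then a < b else a \<le> b"
    if bounds: "(a, s) \<in> ?val ` set Ls" "(b, s') \<in> ?val ` set Hs" for a s b s'
  proof -
    obtain p k q m where lh: "(p, k, s) \<in> set Ls" "(q, m, s') \<in> set Hs"
      and ab: "a = w p + real_of_int k" "b = w q + real_of_int m"
      using bounds by fastforce
    from lh have "combine_bounds (p, k, s) (q, m, s') \<in> set (fm_elim x z D)"
      unfolding fm_elim_def Ls_def Hs_def by (auto simp del: combine_bounds.simps)
    then have "dc_holds w (combine_bounds (p, k, s) (q, m, s'))"
      using sat by blast
    with ab show ?thesis by (auto split: if_splits)
  qed
  then obtain t where t_lower: "\<forall>(a, s)\<in>?val ` set Ls. if s then a < t else a \<le> t"
    and t_upper: "\<forall>(b, s)\<in>?val ` set Hs. if s then t < b else t \<le> b"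
    using exists_between_bounds[of "?val ` set Ls" "?val ` set Hs"] by auto
  have "dc_holds (w(x := t)) g" if g: "g \<in> set D" for g
  proof (cases g)
    case (fields a b r c)
    consider "a \<noteq> x" "b \<noteq> x" | "a = x" "b = x" | "(a = x) \<noteq> (b = x)" by blast
    then show ?thesis
    proof cases
      case 1
      then have "g \<in> set (fm_elim x z D)" using g fields unfolding fm_elim_def by auto
      with sat 1 fields show ?thesis by auto
    next
      case 2
      then have "(z, z, r, c) \<in> set (fm_elim x z D)" using g fields unfolding fm_elim_def by force
      with sat 2 fields show ?thesis by fastforce
    next
      case 3
      have "bound_below w l t" if "l \<in> set (lower_bounds x g)" for l
        using t_lower that g unfolding Ls_def by (cases l) (fastforce split: if_splits)
      moreover have "bound_above w h t" if "h \<in> set (upper_bounds x g)" for h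
        using t_upper that g unfolding Hs_def by (cases h) (fastforce split: if_splits)
      ultimately show ?thesis using dc_holds_upd_iff_bounds[OF 3] fields by blast
    qed
  qed
  then show ?thesis by blast
qed

lemma fm_elim_iff:
  "z \<noteq> x \<Longrightarrow> (\<exists>t. \<forall>g\<in>set D. dc_holds (w(x := t)) g) \<longleftrightarrow> (\<forall>g\<in>set (fm_elim x z D). dc_holds w g)"
  using fm_elim_sound fm_elim_complete by metis

section \<open>1-bounded zones as difference constraints\<close>

definition ref_val :: "('c \<Rightarrow> real) \<Rightarrow> 'c option \<Rightarrow> real" where
  "ref_val v = case_option 0 v"

lemma ref_val_simps [simp]: "ref_val v None = 0" "ref_val v (Some y) = v y"
  by (simp_all add: ref_val_def)

lemma ref_val_upd: "ref_val (v(x := t)) = (ref_val v)(Some x := t)"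
  by (auto simp: ref_val_def split: option.splits)

text \<open>Zones are described by difference constraints over \<open>'c option\<close>, where \<open>None\<close> is a
  reference clock that is constantly \<open>0\<close>.\<close>
definition dc_zone :: "'c option dc list \<Rightarrow> ('c \<Rightarrow> real) set" where
  "dc_zone D = {v \<in> unit_box. \<forall>g\<in>set D. dc_holds (ref_val v) g}"

fun flip :: "rel \<Rightarrow> rel" where
  "flip RLt = RGt" | "flip RLe = RGe" | "flip REq = REq" | "flip RGe = RLe" | "flip RGt = RLt"

lemma rel_holds_flip: "rel_holds (flip r) d (-c) \<longleftrightarrow> rel_holds r (-d) c"
  by (cases r) auto

text \<open>On \<open>[-1, 1]\<close>, a comparison with a constant of absolute value at least \<open>2\<close> is either
  trivially true or trivially false, and can be replaced by one with constant \<open>\<plusminus>1\<close>.\<close>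
definition clamp :: "rel \<Rightarrow> int \<Rightarrow> rel \<times> int" where
  "clamp r c =
    (if c \<ge> 2 then (if r = RLt \<or> r = RLe then (RLe, 1) else (RGt, 1))
     else if c \<le> -2 then (if r = RGt \<or> r = RGe then (RGe, -1) else (RLt, -1))
     else (r, c))"

lemma rel_holds_clamp:
  assumes "-1 \<le> d" "d \<le> 1"
  shows "rel_holds (fst (clamp r c)) d (snd (clamp r c)) \<longleftrightarrow> rel_holds r d c"
proof -
  consider "c \<ge> 2" | "c \<le> -2" | "-2 < c" "c < 2" by linarith
  then show ?thesis
  proof cases
    case 1
    then have "real_of_int c \<ge> 2" by simp
    with 1 assms show ?thesis by (cases r) (auto simp: clamp_def)
  next
    case 2
    then have "real_of_int c \<le> -2" by simp
    with 2 assms show ?thesis by (cases r) (auto simp: clamp_def)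
  qed (auto simp: clamp_def)
qed

lemma clamp_const: "snd (clamp r c) \<in> {-1, 0, 1}"
  by (auto simp: clamp_def)

text \<open>A constraint between the reference clock and itself becomes \<open>y - y \<bowtie> c\<close> for an arbitrary
  clock \<open>y\<close>.\<close>
fun zc_of_dc :: "'c option dc \<Rightarrow> 'c zc" where
  "zc_of_dc (Some y, None, r, c) = ZSingle y (fst (clamp r c)) (snd (clamp r c))"
| "zc_of_dc (None, Some y, r, c) = ZSingle y (fst (clamp (flip r) (-c))) (snd (clamp (flip r) (-c)))"
| "zc_of_dc (Some y, Some z, r, c) = ZDiff y z (fst (clamp r c)) (snd (clamp r c))"
| "zc_of_dc (None, None, r, c) = ZDiff undefined undefined (fst (clamp r c)) (snd (clamp r c))"

lemma zc_const_zc_of_dc: "zc_const (zc_of_dc g) \<in> {-1, 0, 1}"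
  by (cases g rule: zc_of_dc.cases) (simp_all only: zc_of_dc.simps zc_const.simps clamp_const)

lemma zc_holds_zc_of_dc:
  assumes "v \<in> unit_box"
  shows "zc_holds v (zc_of_dc g) \<longleftrightarrow> dc_holds (ref_val v) g"
proof -
  have v: "0 \<le> v y" "v y \<le> 1" for y using assms by (auto simp: unit_box_def)
  show ?thesis
  proof (cases g rule: zc_of_dc.cases)
    case (1 y r c)
    then show ?thesis using rel_holds_clamp[of "v y" r c] v[of y] by auto
  next
    case (2 y r c)
    then show ?thesis
      using rel_holds_clamp[of "v y" "flip r" "-c"] rel_holds_flip[of r "v y" c] v[of y] by auto
  next
    case (3 y z r c)
    then show ?thesis using rel_holds_clamp[of "v y - v z" r c] v[of y] v[of z] by auto
  next
    case (4 r c)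
    then show ?thesis using rel_holds_clamp[of 0 r c] by auto
  qed
qed

lemma dc_zone_in_zones1: "dc_zone D \<in> zones1"
proof -
  have "dc_zone D = zone_of (map zc_of_dc D)"
    unfolding dc_zone_def zone_of_def by (auto simp: zc_holds_zc_of_dc simp del: zc_of_dc.simps)
  then show ?thesis
    unfolding zones1_def using zc_const_zc_of_dc by fastforce
qed

fun dc_of_zc :: "'c zc \<Rightarrow> 'c option dc" where
  "dc_of_zc (ZSingle y r c) = (Some y, None, r, c)"
| "dc_of_zc (ZDiff y z r c) = (Some y, Some z, r, c)"

lemma zones1_eq_range_dc_zone: "zones1 = range dc_zone"
proof
  show "range dc_zone \<subseteq> zones1" using dc_zone_in_zones1 by blast
next
  have "dc_holds (ref_val v) (dc_of_zc a) \<longleftrightarrow> zc_holds v a" for v and a :: "'c zc"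
    by (cases a) auto
  then have "zone_of cs = dc_zone (map dc_of_zc cs)" for cs
    unfolding zone_of_def dc_zone_def by auto
  then show "zones1 \<subseteq> range dc_zone" unfolding zones1_def by auto
qed

lemma zones1_subset_unit_box: "Z \<in> zones1 \<Longrightarrow> Z \<subseteq> unit_box"
  unfolding zones1_def zone_of_def by auto

definition clock_list :: "'c::finite list" where
  "clock_list = (SOME xs. set xs = UNIV)"

lemma set_clock_list [simp]: "set (clock_list :: 'c::finite list) = UNIV"
  unfolding clock_list_def by (rule someI_ex) (rule finite_list, simp)

definition unit_box_dcs :: "'c::finite option dc list" where
  "unit_box_dcs = concat (map (\<lambda>y. [(Some y, None, RGe, 0), (Some y, None, RLe, 1)]) clock_list)"

lemma unit_box_iff_dcs: "(v :: 'c::finite \<Rightarrow> real) \<in> unit_box \<longleftrightarrow> (\<forall>g\<in>set unit_box_dcs. dc_holds (ref_val v) g)"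
  unfolding unit_box_dcs_def unit_box_def by auto

lemma dc_zone_eq_dcs: "dc_zone D = {v :: 'c::finite \<Rightarrow> real. \<forall>g\<in>set (D @ unit_box_dcs). dc_holds (ref_val v) g}"
  unfolding dc_zone_def unit_box_iff_dcs by auto

lemma dc_zone_Int_clock_eq1: "dc_zone D \<inter> clock_eq1 x = dc_zone ((Some x, None, REq, 1) # D)"
  unfolding dc_zone_def clock_eq1_def by auto

fun guard_dcs :: "('c \<Rightarrow> nat) \<Rightarrow> 'c cc \<Rightarrow> 'c option dc list" where
  "guard_dcs u CTrue = []"
| "guard_dcs u (CLt x k) = [(Some x, None, RLt, int k - int (u x))]"
| "guard_dcs u (CEq x k) = [(Some x, None, REq, int k - int (u x))]"
| "guard_dcs u (CGt x k) = [(Some x, None, RGt, int k - int (u x))]"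
| "guard_dcs u (CAnd a b) = guard_dcs u a @ guard_dcs u b"

lemma sat_iff_guard_dcs:
  "sat (\<lambda>x. real (u x) + v x) \<phi> \<longleftrightarrow> (\<forall>g\<in>set (guard_dcs u \<phi>). dc_holds (ref_val v) g)"
  by (induction \<phi>) auto

lemma dc_zone_guard: "{v \<in> dc_zone D. sat (\<lambda>x. real (u x) + v x) \<phi>} = dc_zone (guard_dcs u \<phi> @ D)"
  unfolding dc_zone_def sat_iff_guard_dcs by auto

lemma zone_reset_single_iff:
  "v \<in> zone_reset Z {x} \<longleftrightarrow> v \<in> unit_box \<and> v x = 0 \<and> (\<exists>t. v(x := t) \<in> Z)" if "Z \<subseteq> unit_box"
proof
  assume "v \<in> zone_reset Z {x}"
  then obtain z where z: "z \<in> Z" "v = reset z {x}" unfolding zone_reset_def by auto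
  moreover have "v(x := z x) = z" using z(2) by (auto simp: reset_def)
  ultimately have "v(x := z x) \<in> Z" by simp
  with z that show "v \<in> unit_box \<and> v x = 0 \<and> (\<exists>t. v(x := t) \<in> Z)"
    by (auto simp: unit_box_def reset_def)
next
  assume "v \<in> unit_box \<and> v x = 0 \<and> (\<exists>t. v(x := t) \<in> Z)"
  then obtain t where "v x = 0" "v(x := t) \<in> Z" by blast
  moreover from \<open>v x = 0\<close> have "v = reset (v(x := t)) {x}" by (auto simp: reset_def)
  ultimately show "v \<in> zone_reset Z {x}" unfolding zone_reset_def by blast
qed

lemma zone_reset_single_dc_zone:
  "zone_reset (dc_zone D) {x} = dc_zone ((Some x, None, REq, 0) # fm_elim (Some x) None (D @ unit_box_dcs))"
    (is "_ = dc_zone (?c # ?F)")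
proof -
  have "dc_zone D \<subseteq> unit_box" unfolding dc_zone_def by blast
  moreover have "(\<exists>t. v(x := t) \<in> dc_zone D) \<longleftrightarrow> (\<forall>g\<in>set ?F. dc_holds (ref_val v) g)" for v
    unfolding dc_zone_eq_dcs mem_Collect_eq ref_val_upd by (rule fm_elim_iff) simp
  moreover have "v \<in> dc_zone (?c # ?F) \<longleftrightarrow> v \<in> unit_box \<and> v x = 0 \<and> (\<forall>g\<in>set ?F. dc_holds (ref_val v) g)" for v
    by (simp add: dc_zone_def)
  ultimately show ?thesis by (auto simp: zone_reset_single_iff)
qed

lemma zone_future_iff: "v \<in> zone_future Z \<longleftrightarrow> v \<in> unit_box \<and> (\<exists>t\<ge>0. (\<lambda>y. v y - t) \<in> Z)"
proof -
  have "v = delay v' t \<longleftrightarrow> v' = (\<lambda>y. v y - t)" for v' t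
    by (auto simp: delay_def)
  then show ?thesis unfolding zone_future_def by auto
qed

text \<open>For the future operator the delay \<open>t\<close> becomes an extra variable \<open>Some None\<close>, which is then
  eliminated; \<open>Some\<close> embeds the clock variables and \<open>case_option None id\<close> maps them back.\<close>
lemma zone_future_dc_zone:
  "zone_future (dc_zone D) =
    dc_zone (map (map_dc (case_option None id))
      (fm_elim (Some None) None (map (map_dc Some) (D @ unit_box_dcs) @ [(Some None, None, RGe, 0)])))"
  (is "_ = dc_zone (map (map_dc ?flat) (fm_elim _ _ ?D'))")
proof (rule set_eqI)
  fix v :: "'a::finite \<Rightarrow> real"
  define W where "W = ref_val v \<circ> ?flat"
  have shifted: "ref_val (\<lambda>y. v y - t) = (\<lambda>a. (W(Some None := t)) (Some a) - t)" for t
    by (auto simp: W_def ref_val_def split: option.splits)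
  have lifted: "dc_holds (W(Some None := t)) (map_dc Some g) \<longleftrightarrow> dc_holds (ref_val (\<lambda>y. v y - t)) g" for t g
    unfolding shifted dc_holds_shift dc_holds_map_dc comp_def ..
  have delay_nonneg: "dc_holds (W(Some None := t)) (Some None, None, RGe, 0) \<longleftrightarrow> 0 \<le> t" for t
    by (simp add: W_def)
  have "(\<exists>t\<ge>0. (\<lambda>y. v y - t) \<in> dc_zone D) \<longleftrightarrow> (\<exists>t. \<forall>g\<in>set ?D'. dc_holds (W(Some None := t)) g)"
    unfolding dc_zone_eq_dcs mem_Collect_eq by (auto simp: lifted delay_nonneg ball_Un simp del: dc_holds.simps)
  also have "\<dots> \<longleftrightarrow> (\<forall>g\<in>set (fm_elim (Some None) None ?D'). dc_holds W g)"
    by (rule fm_elim_iff) simp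
  also have "\<dots> \<longleftrightarrow> (\<forall>g\<in>set (map (map_dc ?flat) (fm_elim (Some None) None ?D')). dc_holds (ref_val v) g)"
    by (simp add: dc_holds_map_dc W_def)
  finally show "v \<in> zone_future (dc_zone D) \<longleftrightarrow> v \<in> dc_zone (map (map_dc ?flat) (fm_elim (Some None) None ?D'))"
    unfolding zone_future_iff by (simp add: dc_zone_def)
qed

section \<open>Closure of 1-bounded zones under the zone operations\<close>

lemma zone_future_zones1: "(Z :: ('c::finite \<Rightarrow> real) set) \<in> zones1 \<Longrightarrow> zone_future Z \<in> zones1"
  by (auto simp: zones1_eq_range_dc_zone zone_future_dc_zone)

lemma Int_clock_eq1_zones1: "(Z :: ('c::finite \<Rightarrow> real) set) \<in> zones1 \<Longrightarrow> Z \<inter> clock_eq1 x \<in> zones1"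
  by (auto simp: zones1_eq_range_dc_zone dc_zone_Int_clock_eq1)

lemma guard_zones1:
  "(Z :: ('c::finite \<Rightarrow> real) set) \<in> zones1 \<Longrightarrow> {v \<in> Z. sat (\<lambda>x. real (u x) + v x) \<phi>} \<in> zones1"
  by (auto simp: zones1_eq_range_dc_zone dc_zone_guard)

lemma zone_reset_insert: "zone_reset Z (insert x r) = zone_reset (zone_reset Z r) {x}"
proof -
  have "reset (reset v r) {x} = reset v (insert x r)" for v
    by (auto simp: reset_def)
  then show ?thesis unfolding zone_reset_def image_image by simp
qed

lemma zone_reset_zones1:
  fixes Z :: "('c::finite \<Rightarrow> real) set"
  assumes "Z \<in> zones1"
  shows "zone_reset Z r \<in> zones1"
proof -
  have "finite r" by simp
  then show ?thesis
  proof (induction r)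
    case empty
    have "reset v {} = v" for v :: "'c \<Rightarrow> real" by (auto simp: reset_def)
    then show ?case using assms unfolding zone_reset_def by simp
  next
    case (insert x r)
    then obtain D where "zone_reset Z r = dc_zone D" by (auto simp: zones1_eq_range_dc_zone)
    then show ?case by (subst zone_reset_insert) (simp add: zone_reset_single_dc_zone dc_zone_in_zones1)
  qed
qed

lemma zero_zone_zones1: "{\<lambda>_. 0} \<in> (zones1 :: ('c::finite \<Rightarrow> real) set set)"
proof -
  have "{\<lambda>_. 0} = dc_zone (map (\<lambda>y. (Some y, None, REq, 0)) (clock_list :: 'c list))"
    by (auto simp: dc_zone_def unit_box_def)
  then show ?thesis by (simp add: dc_zone_in_zones1)
qed

section \<open>Simulation between the timed automaton and \<open>R(A)\<close>\<close>

definition plus_nat :: "('c \<Rightarrow> nat) \<Rightarrow> ('c \<Rightarrow> real) \<Rightarrow> ('c \<Rightarrow> real)" where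
  "plus_nat u v = (\<lambda>x. real (u x) + v x)"

lemma ta_run_trans: "ta_run E c G1 c' \<Longrightarrow> ta_run E c' G2 c'' \<Longrightarrow> ta_run E c (G1 \<union> G2) c''"
proof (induction rule: ta_run.induct)
  case (ta_discrete l g r l' v G c')
  then have "ta_run E (l, v) (r \<union> (G \<union> G2)) c''" by (auto intro: ta_run.ta_discrete)
  then show ?case by (simp add: Un_assoc)
qed (auto intro: ta_run.ta_delay)

lemma R_run_trans: "R_run E q w q' \<Longrightarrow> R_run E q' w' q'' \<Longrightarrow> R_run E q (w @ w') q''"
  by (induction rule: R_run.induct) (auto intro: R_run.intros)

lemma R_step_sound:
  assumes "R_step E (l, u, Z, \<gamma>) s (l', u', Z', \<gamma>')" "v' \<in> Z'"
  shows "\<exists>v\<in>Z. \<exists>G. ta_run E (l, plus_nat u v) G (l', plus_nat u' v') \<and> G \<union> \<gamma>' = \<gamma>"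
  using assms(1)
proof cases
  case R_delay
  then obtain v t where v: "v \<in> Z" "t \<ge> 0" "v' = delay v t"
    using assms(2) unfolding zone_future_def by auto
  have "delay (plus_nat u v) t = plus_nat u' v'"
    using v R_delay by (auto simp: delay_def plus_nat_def)
  then have "ta_run E (l, plus_nat u v) {} (l', plus_nat u' v')"
    using R_delay v(2) by (metis ta_refl ta_run.ta_delay)
  then show ?thesis using v R_delay by blast
next
  case (R_wrap x)
  then obtain v where v: "v \<in> Z" "v x = 1" "v' = reset v {x}"
    using assms(2) unfolding zone_reset_def clock_eq1_def by auto
  then have "plus_nat u' v' = plus_nat u v"
    using R_wrap by (auto simp: plus_nat_def reset_def)
  then show ?thesis using v R_wrap by (metis ta_refl sup_bot_left)
next
  case (R_edge \<phi> r)
  then obtain v where v: "v \<in> Z" "sat (plus_nat u v) \<phi>" "v' = reset v r"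
    using assms(2) unfolding zone_reset_def plus_nat_def by auto
  have "reset (plus_nat u v) r = plus_nat u' v'"
    using v R_edge by (auto simp: plus_nat_def reset_def nreset_def)
  then have "ta_run E (l, plus_nat u v) (r \<union> {}) (l', plus_nat u' v')"
    using R_edge v(2) by (metis ta_refl ta_discrete)
  then show ?thesis using v R_edge by auto
qed

lemma R_run_sound:
  "R_run E (l, u, Z, \<gamma>) w (l', u', Z', \<gamma>') \<Longrightarrow> v' \<in> Z' \<Longrightarrow>
   \<exists>v\<in>Z. \<exists>G. ta_run E (l, plus_nat u v) G (l', plus_nat u' v') \<and> G \<union> \<gamma>' = \<gamma>"
proof (induction "(l, u, Z, \<gamma>)" w "(l', u', Z', \<gamma>')" arbitrary: l u Z \<gamma> rule: R_run.induct)
  case R_refl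
  then show ?case by (auto intro: ta_refl)
next
  case (R_cons s q1 w)
  obtain l1 u1 Z1 \<gamma>1 where q1: "q1 = (l1, u1, Z1, \<gamma>1)" by (cases q1)
  from R_cons.hyps(3) R_cons.prems q1 obtain v1 G1 where
    v1: "v1 \<in> Z1" "ta_run E (l1, plus_nat u1 v1) G1 (l', plus_nat u' v')" "G1 \<union> \<gamma>' = \<gamma>1" by blast
  from R_step_sound[OF R_cons.hyps(1)[unfolded q1] v1(1)] obtain v G0 where
    "v \<in> Z" "ta_run E (l, plus_nat u v) G0 (l1, plus_nat u1 v1)" "G0 \<union> \<gamma>1 = \<gamma>" by blast
  then show ?case using v1 ta_run_trans by (metis Un_assoc)
qed

lemma R_run_delay_then_wrap:
  fixes Z :: "('c::finite \<Rightarrow> real) set"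
  assumes "Z \<in> zones1" "v \<in> Z" "s \<ge> 0" "delay v s \<in> unit_box" "v x + s = 1"
  obtains w Z' where "R_run E (l, u, Z, \<gamma>) w (l, u(x := Suc (u x)), Z', \<gamma>)"
    "Z' \<in> zones1" "reset (delay v s) {x} \<in> Z'"
proof
  let ?Z' = "zone_reset (zone_future Z \<inter> clock_eq1 x) {x}"
  have "delay v s \<in> zone_future Z" "delay v s \<in> clock_eq1 x"
    using assms unfolding zone_future_def clock_eq1_def delay_def by auto
  then show "reset (delay v s) {x} \<in> ?Z'" unfolding zone_reset_def by blast
  show "?Z' \<in> zones1"
    by (intro zone_reset_zones1 Int_clock_eq1_zones1 zone_future_zones1 assms(1))
  show "R_run E (l, u, Z, \<gamma>) (label_word None @ label_word (if x \<in> \<gamma> then None else Some x) @ [])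
      (l, u(x := Suc (u x)), ?Z', \<gamma>)"
    by (intro R_cons[OF R_delay] R_cons[OF R_wrap] R_refl)
qed

text \<open>Induction on the number of integer boundaries the delay crosses: each one is passed by a
  wrapping step of the clock that reaches \<open>1\<close> first.\<close>
lemma R_run_delay:
  fixes Z :: "('c::finite \<Rightarrow> real) set"
  shows "Z \<in> zones1 \<Longrightarrow> v \<in> Z \<Longrightarrow> d \<ge> 0 \<Longrightarrow>
    \<exists>w u' Z' v'. R_run E (l, u, Z, \<gamma>) w (l, u', Z', \<gamma>) \<and> Z' \<in> zones1 \<and> v' \<in> Z' \<and>
      plus_nat u' v' = plus_nat u (delay v d)"
proof (induction "\<Sum>y\<in>UNIV. nat \<lfloor>v y + d\<rfloor>" arbitrary: u Z v d rule: less_induct)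
  case less
  have v_unit: "0 \<le> v y" "v y \<le> 1" for y
    using less.prems zones1_subset_unit_box unfolding unit_box_def by auto
  show ?case
  proof (cases "\<forall>y. v y + d \<le> 1")
    case True
    then have "delay v d \<in> zone_future Z"
      unfolding zone_future_def using less.prems v_unit by (auto simp: unit_box_def delay_def)
    moreover have "R_run E (l, u, Z, \<gamma>) (label_word None @ []) (l, u, zone_future Z, \<gamma>)"
      by (rule R_cons[OF R_delay R_refl])
    ultimately show ?thesis using zone_future_zones1[OF less.prems(1)] by fastforce
  next
    case False
    have "Max (range v) \<in> range v" by (rule Max_in) auto
    then obtain x where x_max: "v x = Max (range v)" by (metis imageE)
    then have x: "v y \<le> v x" for y by simp
    define s where "s = 1 - v x"
    have "s \<ge> 0" "v x + s = 1" using v_unit unfolding s_def by auto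
    obtain y where "v y + d > 1" using False by (auto simp: not_le)
    with x[of y] have "s < d" unfolding s_def by linarith
    have "0 \<le> v y + s \<and> v y + s \<le> 1" for y
      using x[of y] v_unit[of y] \<open>s \<ge> 0\<close> unfolding s_def by linarith
    then have "delay v s \<in> unit_box" unfolding unit_box_def delay_def by simp
    then obtain w1 Z1 where run1: "R_run E (l, u, Z, \<gamma>) w1 (l, u(x := Suc (u x)), Z1, \<gamma>)"
      and Z1: "Z1 \<in> zones1" "reset (delay v s) {x} \<in> Z1"
      by (rule R_run_delay_then_wrap[OF less.prems(1,2) \<open>s \<ge> 0\<close> _ \<open>v x + s = 1\<close>])
    define v1 where "v1 = reset (delay v s) {x}"
    have v1_delay: "v1 y + (d - s) = (if y = x then v y + d - 1 else v y + d)" for y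
      unfolding v1_def reset_def delay_def s_def by auto
    have "\<lfloor>v x + d - 1\<rfloor> = \<lfloor>v x + d\<rfloor> - 1" "\<lfloor>v x + d\<rfloor> \<ge> 1"
      using \<open>s < d\<close> unfolding s_def by linarith+
    then have "(\<Sum>y\<in>UNIV. nat \<lfloor>v1 y + (d - s)\<rfloor>) < (\<Sum>y\<in>UNIV. nat \<lfloor>v y + d\<rfloor>)"
      by (intro sum_strict_mono_ex1) (auto simp: v1_delay)
    from less.hyps[OF this Z1(1) Z1(2)[folded v1_def]] \<open>s < d\<close> obtain w2 u' Z' v' where
      "R_run E (l, u(x := Suc (u x)), Z1, \<gamma>) w2 (l, u', Z', \<gamma>)" "Z' \<in> zones1" "v' \<in> Z'"
      "plus_nat u' v' = plus_nat (u(x := Suc (u x))) (delay v1 (d - s))"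
      by (metis diff_ge_0_iff_ge less_imp_le)
    moreover have "plus_nat (u(x := Suc (u x))) (delay v1 (d - s)) = plus_nat u (delay v d)"
      by (auto simp: plus_nat_def v1_delay[unfolded delay_def] delay_def)
    ultimately show ?thesis using R_run_trans[OF run1] by metis
  qed
qed

lemma R_run_complete:
  fixes Z :: "('c::finite \<Rightarrow> real) set"
  shows "ta_run E (l, \<nu>) G c' \<Longrightarrow> Z \<in> zones1 \<Longrightarrow> (\<lambda>x. \<nu> x - real (u x)) \<in> Z \<Longrightarrow>
    \<exists>w u' Z'. R_run E (l, u, Z, G) w (fst c', u', Z', {}) \<and> Z' \<in> zones1 \<and>
      (\<lambda>x. snd c' x - real (u' x)) \<in> Z'"
proof (induction "(l, \<nu>)" G c' arbitrary: l \<nu> u Z rule: ta_run.induct)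
  case ta_refl
  then show ?case by (auto intro: R_refl)
next
  case (ta_delay d l \<nu> G c')
  obtain w u1 Z1 v1 where run1: "R_run E (l, u, Z, G) w (l, u1, Z1, G)" "Z1 \<in> zones1" "v1 \<in> Z1"
    and "plus_nat u1 v1 = plus_nat u (delay (\<lambda>x. \<nu> x - real (u x)) d)"
    using R_run_delay[OF ta_delay.prems ta_delay.hyps(1), where E = E and l = l and u = u and \<gamma> = G]
    by blast
  then have "v1 = (\<lambda>x. delay \<nu> d x - real (u1 x))"
    by (auto simp: plus_nat_def delay_def fun_eq_iff algebra_simps)
  with ta_delay.hyps(3)[OF run1(2)] obtain w' u' Z' where
    "R_run E (l, u1, Z1, G) w' (fst c', u', Z', {})" "Z' \<in> zones1" "(\<lambda>x. snd c' x - real (u' x)) \<in> Z'"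
    using run1(3) by blast
  then show ?case using R_run_trans[OF run1(1)] by blast
next
  case (ta_discrete l g r l' \<nu> G c')
  define Z1 where "Z1 = zone_reset {v \<in> Z. sat (\<lambda>x. real (u x) + v x) g} r"
  have step: "R_step E (l, u, Z, r \<union> G) None (l', nreset u r, Z1, G)"
    unfolding Z1_def using ta_discrete.hyps(1) by (intro R_edge) auto
  have "Z1 \<in> zones1" unfolding Z1_def by (intro zone_reset_zones1 guard_zones1 ta_discrete.prems(1))
  moreover have "(\<lambda>x. reset \<nu> r x - real (nreset u r x)) = reset (\<lambda>x. \<nu> x - real (u x)) r"
    by (auto simp: reset_def nreset_def)
  then have "(\<lambda>x. reset \<nu> r x - real (nreset u r x)) \<in> Z1"
    using ta_discrete.prems(2) ta_discrete.hyps(2) unfolding Z1_def zone_reset_def by auto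
  ultimately obtain w u' Z' where run: "R_run E (l', nreset u r, Z1, G) w (fst c', u', Z', {})"
    and "Z' \<in> zones1" "(\<lambda>x. snd c' x - real (u' x)) \<in> Z'"
    using ta_discrete.hyps(4) by blast
  with R_cons[OF step run] show ?case by blast
qed

theorem proposition3:
  fixes L :: "'l set" and E :: "('l, 'c::finite) edge set"
    and l0 l :: 'l and \<nu> :: "'c \<Rightarrow> real" and \<gamma> :: "'c set"
  assumes "timed_automaton L E"
    and "l0 \<in> L" and "l \<in> L"
    and "\<forall>x. \<nu> x \<ge> 0"
  shows "ta_run E (l0, (\<lambda>_. 0)) \<gamma> (l, \<nu>) \<longleftrightarrow>
    (\<exists>w u Z. R_run E (l0, (\<lambda>_. 0), {(\<lambda>_. 0)}, \<gamma>) w (l, u, Z, {})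
       \<and> Z \<in> zones1 \<and> (\<lambda>x. \<nu> x - real (u x)) \<in> Z)"
  \<comment> \<open>the correspondence holds for any edge set\<close>
proof
  assume "ta_run E (l0, (\<lambda>_. 0)) \<gamma> (l, \<nu>)"
  from R_run_complete[OF this zero_zone_zones1, of "\<lambda>_. 0"]
  show "\<exists>w u Z. R_run E (l0, (\<lambda>_. 0), {(\<lambda>_. 0)}, \<gamma>) w (l, u, Z, {})
       \<and> Z \<in> zones1 \<and> (\<lambda>x. \<nu> x - real (u x)) \<in> Z" by simp
next
  assume "\<exists>w u Z. R_run E (l0, (\<lambda>_. 0), {(\<lambda>_. 0)}, \<gamma>) w (l, u, Z, {})
       \<and> Z \<in> zones1 \<and> (\<lambda>x. \<nu> x - real (u x)) \<in> Z"
  then obtain w u Z where run: "R_run E (l0, (\<lambda>_. 0), {(\<lambda>_. 0)}, \<gamma>) w (l, u, Z, {})"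
    and fraction: "(\<lambda>x. \<nu> x - real (u x)) \<in> Z" by blast
  from R_run_sound[OF run fraction] show "ta_run E (l0, (\<lambda>_. 0)) \<gamma> (l, \<nu>)"
    by (auto simp: plus_nat_def)
qed

end
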